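(* Let $(t_1,s_1),(t_2,s_2)\in\mathbb{C}^\times\times\mathbb{C}^\times$ with $t_1\ne t_2$ and $s_1\neq s_2$, let $X_1=A_2(t_1,s_1)$, $X_2=A_2(t_2,s_2)$, $T=X_1+X_2$, and $\varepsilon_0=\det(X_1)+\det(X_2)-\det(X_1+X_2)$. Then for all $n\in\mathbb{N}$, $T^{2n}=(\varepsilon_0+2)^nI_2$ and $T^{2n+1}=(\varepsilon_0+2)^nT$.
   Context: $\mathbb{C}^\times=\mathbb{C}\setminus\{0\}$; $A_2(t,s)=\begin{pmatrix} t & s\\ \frac{1-t^2}{s} & -t\end{pmatrix}$; $I_2$ is the $2\times2$ identity matrix. *)

theory Defs
  imports "HOL-Analysis.Analysis"
begin

definition A2 :: "complex \<Rightarrow> complex \<Rightarrow> complex^2^2" where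
  "A2 t s = (\<chi> i j. if i = 1 then (if j = 1 then t else s)
                     else (if j = 1 then (1 - t^2) / s else - t))"

fun matpow :: "'a::comm_ring_1^'n^'n \<Rightarrow> nat \<Rightarrow> 'a^'n^'n" where
  "matpow A 0 = mat 1"
| "matpow A (Suc k) = A ** matpow A k"

end

theory Submission
  imports Defs
begin

text \<open>Both summands are traceless, hence so is T, and Cayley-Hamilton for a traceless
  2x2 matrix gives T^2 = -det T I. As det X_1 = det X_2 = -1, the scalar -det T equals
  \<epsilon>0 + 2, and the powers of T follow from T^2 being scalar.\<close>

lemma mat_mult_left: "(mat c ** A) $ i $ j = c * A $ i $ j"
  for A :: "'a::comm_ring_1^'m^'n"
proof -
  have "(mat c ** A) $ i $ j = (\<Sum>k\<in>UNIV. (if i = k then c * A $ k $ j else 0))"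
    by (simp add: matrix_matrix_mult_def mat_def if_distrib[where f = "\<lambda>x. x * _"] cong del: if_weak_cong)
  also have "\<dots> = c * A $ i $ j"
    by simp
  finally show ?thesis .
qed

lemma mat_mult_right: "(A ** mat c) $ i $ j = A $ i $ j * c"
  for A :: "'a::comm_ring_1^'m^'n"
proof -
  have "(A ** mat c) $ i $ j = (\<Sum>k\<in>UNIV. (if k = j then A $ i $ k * c else 0))"
    by (simp add: matrix_matrix_mult_def mat_def if_distrib cong del: if_weak_cong)
  also have "\<dots> = A $ i $ j * c"
    by simp
  finally show ?thesis .
qed

lemma mat_mult_commute: "(A::'a::comm_ring_1^'n^'n) ** mat c = mat c ** A"
  by (simp add: vec_eq_iff mat_mult_left mat_mult_right mult.commute)

lemma mat_mult_mat: "mat a ** mat b = (mat (a * b) :: 'a::comm_ring_1^'n^'n)"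
  by (simp add: vec_eq_iff mat_mult_left) (simp add: mat_def)

lemma matpow_even_odd_if_square_scalar:
  fixes A :: "'a::comm_ring_1^'n^'n"
  assumes "A ** A = mat c"
  shows "matpow A (2 * n) = mat (c ^ n) \<and> matpow A (2 * n + 1) = mat (c ^ n) ** A"
proof -
  have even: "matpow A (2 * n) = mat (c ^ n)"
  proof (induction n)
    case 0
    then show ?case by simp
  next
    case (Suc n)
    have "matpow A (2 * Suc n) = (A ** A) ** matpow A (2 * n)"
      by (simp add: matrix_mul_assoc)
    also have "\<dots> = mat c ** mat (c ^ n)"
      by (simp only: assms Suc)
    finally show ?case by (simp add: mat_mult_mat)
  qed
  then show ?thesis by (simp add: mat_mult_commute)
qed

lemma matrix_mult_2x2: "((A::'a::comm_ring_1^2^2) ** B) $ i $ j = A$i$1 * B$1$j + A$i$2 * B$2$j"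
  by (simp add: matrix_matrix_mult_def sum_2)

lemma square_2x2_traceless:
  fixes A :: "'a::comm_ring_1^2^2"
  assumes "trace A = 0"
  shows "A ** A = mat (- det A)"
proof -
  have "A$2$2 = - A$1$1"
    using assms by (simp add: trace_def sum_2 eq_neg_iff_add_eq_0 add.commute)
  then show ?thesis
    by (simp add: vec_eq_iff forall_2 matrix_mult_2x2 mat_def det_2 algebra_simps power2_eq_square)
qed

lemma trace_A2: "trace (A2 t s) = 0"
  by (simp add: trace_def sum_2 A2_def)

lemma det_A2: "s \<noteq> 0 \<Longrightarrow> det (A2 t s) = -1"
  by (simp add: det_2 A2_def field_simps power2_eq_square)

theorem mainTheorem13:
  fixes t1 s1 t2 s2 :: complex and n :: nat
  assumes "t1 \<noteq> 0" "s1 \<noteq> 0" "t2 \<noteq> 0" "s2 \<noteq> 0"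
    and "t1 \<noteq> t2" "s1 \<noteq> s2"
  defines "X1 \<equiv> A2 t1 s1" and "X2 \<equiv> A2 t2 s2"
  defines "T \<equiv> X1 + X2"
  defines "\<epsilon>0 \<equiv> det X1 + det X2 - det (X1 + X2)"
  shows "matpow T (2 * n) = mat ((\<epsilon>0 + 2) ^ n)
       \<and> matpow T (2 * n + 1) = mat ((\<epsilon>0 + 2) ^ n) ** T"
proof -
  have "trace T = 0"
    by (simp add: T_def X1_def X2_def trace_add trace_A2)
  then have "T ** T = mat (- det T)"
    by (rule square_2x2_traceless)
  also have "- det T = \<epsilon>0 + 2"
    using \<open>s1 \<noteq> 0\<close> \<open>s2 \<noteq> 0\<close> by (simp add: \<epsilon>0_def T_def X1_def X2_def det_A2)
  finally show ?thesis
    by (rule matpow_even_odd_if_square_scalar)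
qed

end
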